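(* Let $\mathbf{S}$ be a real symmetric positive semidefinite $p\times p$ matrix and $\mathbf{T}$ a real symmetric positive definite $p\times p$ matrix, and for $\lambda_a\in(0,\infty)$ define $$\hat{\mathbf{\Omega}}^{\mathrm{I}a}(\lambda_a) = \Big\{\Big[\lambda_a\mathbf{I}_p + \tfrac14(\mathbf{S}-\lambda_a\mathbf{T})^2\Big]^{1/2} + \tfrac12(\mathbf{S}-\lambda_a\mathbf{T})\Big\}^{-1}.$$ Then: (i) $\hat{\mathbf{\Omega}}^{\mathrm{I}a}(\lambda_a)$ is well defined and positive definite for every $\lambda_a\in(0,\infty)$; (ii) if moreover $\mathbf{S}$ is positive definite, then $\lim_{\lambda_a\to 0^+}\hat{\mathbf{\Omega}}^{\mathrm{I}a}(\lambda_a) = \mathbf{S}^{-1}$; (iii) $\lim_{\lambda_a\to\infty}\hat{\mathbf{\Omega}}^{\mathrm{I}a}(\lambda_a) = \mathbf{T}$.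
   Context: $\mathbf{I}_p$ is the $p\times p$ identity; for a real symmetric positive definite matrix $\mathbf{H}$, $\mathbf{H}^{1/2}$ is its unique symmetric positive definite square root. *)

theory Defs
  imports "HOL-Analysis.Analysis"
begin

definition sym_mat :: "real^'n^'n \<Rightarrow> bool" where
  "sym_mat A \<longleftrightarrow> transpose A = A"

definition psd_mat :: "real^'n^'n \<Rightarrow> bool" where
  "psd_mat A \<longleftrightarrow> sym_mat A \<and> (\<forall>x. 0 \<le> x \<bullet> (A *v x))"

definition pd_mat :: "real^'n^'n \<Rightarrow> bool" where
  "pd_mat A \<longleftrightarrow> sym_mat A \<and> (\<forall>x. x \<noteq> 0 \<longrightarrow> 0 < x \<bullet> (A *v x))"

definition mat_sqrt :: "real^'n^'n \<Rightarrow> real^'n^'n" where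
  "mat_sqrt H = (THE R. pd_mat R \<and> R ** R = H)"

definition inner_mat :: "real^'n^'n \<Rightarrow> real^'n^'n \<Rightarrow> real \<Rightarrow> real^'n^'n" where
  "inner_mat S T l = l *\<^sub>R mat 1 + (1/4) *\<^sub>R ((S - l *\<^sub>R T) ** (S - l *\<^sub>R T))"

definition pre_omega :: "real^'n^'n \<Rightarrow> real^'n^'n \<Rightarrow> real \<Rightarrow> real^'n^'n" where
  "pre_omega S T l = mat_sqrt (inner_mat S T l) + (1/2) *\<^sub>R (S - l *\<^sub>R T)"

definition Omega_Ia :: "real^'n^'n \<Rightarrow> real^'n^'n \<Rightarrow> real \<Rightarrow> real^'n^'n" where
  "Omega_Ia S T l = matrix_inv (pre_omega S T l)"

end

theory Submission
  imports Defs
begin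

text \<open>Write \<open>A = S - l T = P diag(d) P\<^sup>T\<close> with \<open>P\<close> orthogonal. Then every matrix in the
  definition of \<open>\<Omega>\<close> is a function of \<open>A\<close>: the positive definite square root of \<open>l I + A\<^sup>2/4\<close> is
  \<open>R = P diag(s) P\<^sup>T\<close> with \<open>s = sqrt (l + d\<^sup>2/4) > \<bar>d\<bar>/2\<close>, the matrix to be inverted is
  \<open>P diag(s + d/2) P\<^sup>T\<close>, and since \<open>(s + d/2)(s - d/2) = l\<close> its inverse is the positive definite
  matrix \<open>P diag((s - d/2)/l) P\<^sup>T = (R - A/2)/l\<close>.

  For the limits, positive definite square roots depend continuously on their square: if
  \<open>Q \<ge> c I\<close> then \<open>c \<parallel>R - Q\<parallel> \<le> \<parallel>R\<^sup>2 - Q\<^sup>2\<parallel>\<close>. As \<open>l \<rightarrow> 0\<close> the matrix under the root tends to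
  \<open>(S/2)\<^sup>2\<close>, so the matrix to be inverted tends to \<open>S\<close>; as \<open>l \<rightarrow> \<infinity>\<close> the rescaled matrix
  \<open>l\<^sup>-\<^sup>2 (l I + A\<^sup>2/4)\<close> tends to \<open>(T/2)\<^sup>2\<close>, so \<open>\<Omega> = R/l + T/2 - S/(2l)\<close> tends to \<open>T\<close>.\<close>

section \<open>Operator bounds for the Frobenius norm\<close>

lemma norm_matrix_vector_mult_le:
  fixes A :: "real^'n^'m"
  shows "norm (A *v x) \<le> norm A * norm x"
proof -
  have "norm (A *v x) = L2_set (\<lambda>i. \<bar>(A *v x) $ i\<bar>) UNIV"
    by (simp add: norm_vec_def)
  also have "\<dots> \<le> L2_set (\<lambda>i. norm (A $ i) * norm x) UNIV"
    by (rule L2_set_mono) (simp_all add: matrix_mult_dot Cauchy_Schwarz_ineq2)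
  also have "\<dots> = norm A * norm x"
    by (simp add: norm_vec_def L2_set_left_distrib)
  finally show ?thesis .
qed

lemma abs_inner_matrix_vector_le:
  fixes A :: "real^'n^'n"
  shows "\<bar>x \<bullet> (A *v x)\<bar> \<le> norm A * (norm x)\<^sup>2"
proof -
  have "\<bar>x \<bullet> (A *v x)\<bar> \<le> norm x * norm (A *v x)"
    by (rule Cauchy_Schwarz_ineq2)
  also have "\<dots> \<le> norm x * (norm A * norm x)"
    by (simp add: mult_left_mono norm_matrix_vector_mult_le)
  finally show ?thesis
    by (simp add: power2_eq_square ac_simps)
qed

lemma norm_matrix_le_of_operator_bound:
  fixes M :: "real^'n^'m"
  assumes "\<And>x. norm (M *v x) \<le> K * norm x"
  shows "norm M \<le> real CARD('m) * real CARD('n) * K"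
proof -
  have entry: "\<bar>M $ i $ j\<bar> \<le> K" for i j
  proof -
    have "M $ i $ j = (M *v axis j 1) $ i"
      by (simp add: matrix_vector_mult_def axis_def if_distrib cong: if_cong)
    also have "\<bar>\<dots>\<bar> \<le> norm (M *v axis j 1)"
      by (rule component_le_norm_cart)
    also have "\<dots> \<le> K"
      using assms[of "axis j 1"] by simp
    finally show ?thesis .
  qed
  have "norm M \<le> (\<Sum>i\<in>UNIV. norm (M $ i))"
    unfolding norm_vec_def by (rule L2_set_le_sum) simp
  also have "\<dots> \<le> (\<Sum>i\<in>(UNIV::'m set). \<Sum>j\<in>(UNIV::'n set). \<bar>M $ i $ j\<bar>)"
    by (rule sum_mono) (rule norm_le_l1_cart)
  also have "\<dots> \<le> (\<Sum>i\<in>(UNIV::'m set). \<Sum>j\<in>(UNIV::'n set). K)"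
    by (intro sum_mono entry)
  also have "\<dots> = real CARD('m) * real CARD('n) * K"
    by simp
  finally show ?thesis .
qed

lemma tendsto_matrix_of_operator_bound:
  fixes M :: "'a \<Rightarrow> real^'n^'m"
  assumes bound: "\<forall>\<^sub>F l in F. \<forall>x. norm ((M l - M0) *v x) \<le> \<delta> l * norm x"
    and \<delta>: "(\<delta> \<longlongrightarrow> 0) F"
  shows "(M \<longlongrightarrow> M0) F"
proof -
  have "\<forall>\<^sub>F l in F. norm (M l - M0) \<le> real CARD('m) * real CARD('n) * \<delta> l"
    using bound by eventually_elim (simp add: norm_matrix_le_of_operator_bound)
  moreover have "((\<lambda>l. real CARD('m) * real CARD('n) * \<delta> l) \<longlongrightarrow> 0) F"
    using tendsto_mult_right_zero[OF \<delta>] by simp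
  ultimately have "((\<lambda>l. M l - M0) \<longlongrightarrow> 0) F"
    by (rule Lim_null_comparison)
  then show ?thesis
    by (simp add: LIM_zero_iff)
qed

section \<open>Symmetric matrices and the spectral theorem\<close>

lemma sym_mat_inner: "sym_mat A \<Longrightarrow> x \<bullet> (A *v y) = (A *v x) \<bullet> y"
  for A :: "real^'n^'n"
  by (metis dot_lmul_matrix sym_mat_def transpose_matrix_vector)

lemma sym_mat_diff: "sym_mat A \<Longrightarrow> sym_mat B \<Longrightarrow> sym_mat (A - B)"
  by (simp add: sym_mat_def transpose_def vec_eq_iff)

lemma sym_mat_scaleR: "sym_mat A \<Longrightarrow> sym_mat (c *\<^sub>R A)"
  by (simp add: sym_mat_def transpose_scalar)

lemma pd_mat_scaleR:
  assumes "pd_mat A" "0 < c"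
  shows "pd_mat (c *\<^sub>R A)"
  using assms by (simp add: pd_mat_def sym_mat_scaleR scaleR_matrix_vector_assoc[symmetric])

lemma pd_mat_mult_self:
  fixes R :: "real^'n^'n"
  assumes "pd_mat R"
  shows "pd_mat (R ** R)"
  unfolding pd_mat_def
proof (intro conjI allI impI)
  have R: "sym_mat R"
    using assms by (simp add: pd_mat_def)
  then show "sym_mat (R ** R)"
    by (simp add: sym_mat_def matrix_transpose_mul)
  fix x :: "real^'n"
  assume "x \<noteq> 0"
  then have "R *v x \<noteq> 0"
    using assms by (force simp: pd_mat_def)
  then show "0 < x \<bullet> ((R ** R) *v x)"
    using sym_mat_inner[OF R, of x "R *v x"] by (simp add: matrix_vector_mul_assoc[symmetric])
qed

lemma pd_mat_lower_bound:
  fixes Q :: "real^'n^'n"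
  assumes "pd_mat Q"
  obtains c where "0 < c" "\<And>x. c * (norm x)\<^sup>2 \<le> x \<bullet> (Q *v x)"
proof -
  have "continuous_on (sphere 0 1) (\<lambda>x::real^'n. x \<bullet> (Q *v x))"
    by (intro continuous_intros)
  moreover have "sphere (0::real^'n) 1 \<noteq> {}"
    by (simp add: sphere_def) (metis norm_axis_1)
  ultimately obtain u where u: "norm u = 1"
    and umin: "\<And>y. norm y = 1 \<Longrightarrow> u \<bullet> (Q *v u) \<le> y \<bullet> (Q *v y)"
    using continuous_attains_inf[of "sphere 0 1" "\<lambda>x. x \<bullet> (Q *v x)"] by auto
  show thesis
  proof
    show "0 < u \<bullet> (Q *v u)"
      using assms u unfolding pd_mat_def by (metis norm_zero zero_neq_one)
    fix x :: "real^'n"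
    show "(u \<bullet> (Q *v u)) * (norm x)\<^sup>2 \<le> x \<bullet> (Q *v x)"
    proof (cases "x = 0")
      case False
      have "u \<bullet> (Q *v u) \<le> (x /\<^sub>R norm x) \<bullet> (Q *v (x /\<^sub>R norm x))"
        using False by (intro umin) simp
      also have "\<dots> = (x \<bullet> (Q *v x)) / (norm x)\<^sup>2"
        by (simp add: matrix_vector_mult_scaleR power2_eq_square divide_inverse ac_simps)
      finally show ?thesis
        using False by (simp add: le_divide_eq)
    qed simp
  qed
qed

definition diag_mat :: "('n \<Rightarrow> real) \<Rightarrow> real^'n^'n" where
  "diag_mat g = (\<chi> i j. if i = j then g i else 0)"

definition orth_diag :: "real^'n^'n \<Rightarrow> ('n \<Rightarrow> real) \<Rightarrow> real^'n^'n" where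
  "orth_diag P g = P ** diag_mat g ** transpose P"

lemma diag_mat_vector_mult: "diag_mat g *v x = (\<chi> i. g i * x $ i)"
proof -
  have "(\<Sum>k\<in>UNIV. (if i = k then g i else 0) * x $ k) = g i * x $ i" for i
    by (simp add: if_distrib if_distribR cong: if_cong)
  then show ?thesis
    by (simp add: diag_mat_def matrix_vector_mult_def vec_eq_iff)
qed

lemma diag_mat_mult: "diag_mat g ** diag_mat h = diag_mat (\<lambda>i. g i * h i)"
proof -
  have "(\<Sum>k\<in>UNIV. (if i = k then g i else 0) * (if k = j then h k else 0))
      = (if i = j then g i * h i else 0)" for i j
    by (cases "i = j") (auto simp: if_distrib if_distribR cong: if_cong)
  then show ?thesis
    by (simp add: diag_mat_def matrix_matrix_mult_def vec_eq_iff)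
qed

lemma matrix_add_rdistrib: "(B + C) ** A = B ** A + C ** (A::real^'n^'n)"
  by (simp add: matrix_matrix_mult_def vec_eq_iff sum.distrib algebra_simps)

lemma matrix_diff_rdistrib: "(B - C) ** A = B ** A - C ** (A::real^'n^'n)"
  by (simp add: matrix_matrix_mult_def vec_eq_iff sum_subtractf algebra_simps)

lemma matrix_diff_ldistrib: "A ** (B - C) = A ** B - A ** (C::real^'n^'n)"
  by (simp add: matrix_matrix_mult_def vec_eq_iff sum_subtractf algebra_simps)

lemma orth_diag_add: "orth_diag P (\<lambda>i. g i + h i) = orth_diag P g + orth_diag P h"
proof -
  have "diag_mat (\<lambda>i. g i + h i) = diag_mat g + diag_mat h"
    by (simp add: diag_mat_def vec_eq_iff)
  then show ?thesis
    by (simp add: orth_diag_def matrix_add_ldistrib matrix_add_rdistrib)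
qed

lemma orth_diag_diff: "orth_diag P (\<lambda>i. g i - h i) = orth_diag P g - orth_diag P h"
proof -
  have "diag_mat (\<lambda>i. g i - h i) = diag_mat g - diag_mat h"
    by (simp add: diag_mat_def vec_eq_iff)
  then show ?thesis
    by (simp add: orth_diag_def matrix_diff_ldistrib matrix_diff_rdistrib)
qed

lemma orth_diag_scaleR: "orth_diag P (\<lambda>i. c * g i) = c *\<^sub>R orth_diag P g"
proof -
  have "diag_mat (\<lambda>i. c * g i) = c *\<^sub>R diag_mat g"
    by (simp add: diag_mat_def vec_eq_iff)
  then show ?thesis
    by (simp add: orth_diag_def scalar_matrix_assoc matrix_scalar_ac)
qed

lemma orth_diag_const:
  fixes P :: "real^'n^'n"
  assumes "orthogonal_matrix P"
  shows "orth_diag P (\<lambda>i. c) = c *\<^sub>R mat 1"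
proof -
  have diag: "diag_mat (\<lambda>i. c) = c *\<^sub>R mat 1"
    by (simp add: diag_mat_def mat_def vec_eq_iff)
  have "orth_diag P (\<lambda>i. c) = c *\<^sub>R (P ** transpose P)"
    unfolding orth_diag_def diag by (simp add: matrix_scalar_ac scalar_matrix_assoc)
  then show ?thesis
    using assms by (simp add: orthogonal_matrix_def)
qed

lemma orth_diag_mult:
  fixes P :: "real^'n^'n"
  assumes "orthogonal_matrix P"
  shows "orth_diag P g ** orth_diag P h = orth_diag P (\<lambda>i. g i * h i)"
proof -
  have "orth_diag P g ** orth_diag P h = P ** (diag_mat g ** (transpose P ** P) ** diag_mat h) ** transpose P"
    by (simp add: orth_diag_def matrix_mul_assoc)
  also have "\<dots> = orth_diag P (\<lambda>i. g i * h i)"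
    using assms by (simp add: orth_diag_def orthogonal_matrix_def diag_mat_mult)
  finally show ?thesis .
qed

lemma sym_mat_orth_diag: "sym_mat (orth_diag P g)"
proof -
  have "transpose (diag_mat g) = diag_mat g"
    by (simp add: diag_mat_def transpose_def vec_eq_iff)
  then show ?thesis
    by (simp add: sym_mat_def orth_diag_def matrix_transpose_mul matrix_mul_assoc)
qed

lemma orth_diag_vector_mult: "orth_diag P g *v x = P *v (diag_mat g *v (transpose P *v x))"
  by (simp add: orth_diag_def matrix_vector_mul_assoc matrix_mul_assoc del: transpose_matrix_vector)

lemma norm_orthogonal_matrix_vector:
  fixes P :: "real^'n^'n"
  assumes "orthogonal_matrix P"
  shows "norm (P *v x) = norm x"
proof -
  have "(P *v x) \<bullet> (P *v x) = x \<bullet> x"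
    using assms
    by (metis dot_lmul_matrix matrix_vector_mul_assoc matrix_vector_mul_lid orthogonal_matrix_def
        transpose_matrix_vector)
  then show ?thesis
    by (simp add: norm_eq_sqrt_inner)
qed

lemma inner_orth_diag:
  fixes P :: "real^'n^'n"
  shows "x \<bullet> (orth_diag P g *v x) = (\<Sum>i\<in>UNIV. g i * ((transpose P *v x) $ i)\<^sup>2)"
proof -
  have "x \<bullet> (orth_diag P g *v x) = (transpose P *v x) \<bullet> (diag_mat g *v (transpose P *v x))"
    by (simp add: orth_diag_vector_mult dot_lmul_matrix)
  then show ?thesis
    by (simp add: diag_mat_vector_mult inner_vec_def power2_eq_square ac_simps)
qed

lemma pd_mat_orth_diag:
  fixes P :: "real^'n^'n"
  assumes P: "orthogonal_matrix P" and g: "\<And>i. 0 < g i"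
  shows "pd_mat (orth_diag P g)"
  unfolding pd_mat_def
proof (intro conjI allI impI sym_mat_orth_diag)
  fix x :: "real^'n"
  assume "x \<noteq> 0"
  moreover have "norm (transpose P *v x) = norm x"
    using P by (simp add: norm_orthogonal_matrix_vector del: transpose_matrix_vector)
  ultimately obtain j where j: "(transpose P *v x) $ j \<noteq> 0"
    by (metis norm_eq_zero vec_eq_iff zero_index)
  have "0 < (\<Sum>i\<in>UNIV. g i * ((transpose P *v x) $ i)\<^sup>2)"
  proof (rule sum_pos2)
    show "0 < g j * ((transpose P *v x) $ j)\<^sup>2"
      using g j by simp
    show "0 \<le> g i * ((transpose P *v x) $ i)\<^sup>2" for i
      using g[of i] by simp
  qed auto
  then show "0 < x \<bullet> (orth_diag P g *v x)"
    by (simp add: inner_orth_diag)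
qed

lemma norm_orth_diag_vector_le:
  fixes P :: "real^'n^'n"
  assumes P: "orthogonal_matrix P" and g: "\<And>i. \<bar>g i\<bar> \<le> K"
  shows "norm (orth_diag P g *v x) \<le> K * norm x"
proof -
  define y where "y = transpose P *v x"
  have K: "0 \<le> K"
    using g abs_ge_zero order_trans by blast
  have "(norm (diag_mat g *v y))\<^sup>2 = (\<Sum>i\<in>UNIV. (g i * y $ i)\<^sup>2)"
    by (simp add: norm_vec_def L2_set_def diag_mat_vector_mult sum_nonneg)
  also have "\<dots> \<le> (\<Sum>i\<in>UNIV. K\<^sup>2 * (y $ i)\<^sup>2)"
  proof (intro sum_mono)
    fix i
    have "(g i)\<^sup>2 \<le> K\<^sup>2"
      using g[of i] K by (simp add: abs_le_square_iff[symmetric])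
    then show "(g i * y $ i)\<^sup>2 \<le> K\<^sup>2 * (y $ i)\<^sup>2"
      by (simp add: power_mult_distrib mult_right_mono)
  qed
  also have "\<dots> = (K * norm y)\<^sup>2"
    by (simp add: norm_vec_def L2_set_def power_mult_distrib sum_nonneg sum_distrib_left)
  finally have "norm (diag_mat g *v y) \<le> K * norm y"
    using K by (simp add: power2_le_iff_abs_le)
  moreover have "norm y = norm x"
    using P by (simp add: y_def norm_orthogonal_matrix_vector del: transpose_matrix_vector)
  ultimately show ?thesis
    using P by (simp add: orth_diag_vector_mult norm_orthogonal_matrix_vector y_def[symmetric]
        del: transpose_matrix_vector)
qed

lemma orth_diag_eigenvector:
  fixes P :: "real^'n^'n"
  assumes P: "orthogonal_matrix P"
  shows "orth_diag P g *v (P *v axis k 1) = g k *\<^sub>R (P *v axis k 1)"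
proof -
  have "transpose P *v (P *v axis k 1) = axis k 1"
    using P by (simp add: matrix_vector_mul_assoc orthogonal_matrix_def)
  moreover have "diag_mat g *v axis k 1 = g k *\<^sub>R axis k (1::real)"
    by (simp add: diag_mat_vector_mult vec_eq_iff axis_def)
  ultimately show ?thesis
    by (simp add: orth_diag_vector_mult matrix_vector_mult_scaleR)
qed

lemma orth_diag_eqI:
  fixes A P :: "real^'n^'n"
  assumes P: "orthogonal_matrix P" and eig: "\<And>j. A *v column j P = d j *\<^sub>R column j P"
  shows "A = orth_diag P d"
proof -
  have "(A ** P) $ i $ j = (A *v column j P) $ i" for i j
    by (simp add: matrix_matrix_mult_def matrix_vector_mult_def column_def)
  moreover have "(P ** diag_mat d) $ i $ j = (d j *\<^sub>R column j P) $ i" for i j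
  proof -
    have "(\<Sum>k\<in>UNIV. P $ i $ k * (if k = j then d k else 0)) = P $ i $ j * d j"
      by (simp add: if_distrib if_distribR cong: if_cong)
    then show ?thesis
      by (simp add: matrix_matrix_mult_def diag_mat_def column_def)
  qed
  ultimately have "A ** P = P ** diag_mat d"
    using eig by (simp add: vec_eq_iff)
  then show ?thesis
    using P by (metis matrix_mul_assoc matrix_mul_rid orth_diag_def orthogonal_matrix_def)
qed

lemma zero_if_linear_le_quadratic:
  fixes a b :: real
  assumes "\<And>t. 2 * t * a \<le> t\<^sup>2 * b"
  shows "a = 0"
proof (rule ccontr)
  assume "a \<noteq> 0"
  define c where "c = \<bar>b\<bar> + 1"
  have c: "0 < c" "b < c"
    by (auto simp: c_def)
  have "2 * (a / c) * a \<le> (a / c)\<^sup>2 * b"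
    by (rule assms)
  then have "2 * a\<^sup>2 * c \<le> a\<^sup>2 * b"
    using c by (simp add: field_simps power2_eq_square)
  moreover have "0 < a\<^sup>2"
    using \<open>a \<noteq> 0\<close> by simp
  ultimately have "2 * c \<le> b"
    by (simp add: mult.commute mult.left_commute)
  then show False
    using c by linarith
qed

text \<open>First-order condition at a maximiser \<open>u\<close> of the quadratic form on the unit sphere of \<open>V\<close>:
  perturbing \<open>u\<close> to \<open>u + t w\<close> changes the form by \<open>2 t (w \<bullet> A u) + O(t\<^sup>2)\<close>.\<close>
lemma sym_mat_max_quadratic_orthogonal:
  fixes A :: "real^'n^'n"
  assumes sym: "sym_mat A" and V: "subspace V" and u: "u \<in> V" "norm u = 1"
    and umax: "\<And>y. y \<in> V \<Longrightarrow> norm y = 1 \<Longrightarrow> y \<bullet> (A *v y) \<le> u \<bullet> (A *v u)"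
    and w: "w \<in> V" "w \<bullet> u = 0"
  shows "w \<bullet> (A *v u) = 0"
proof (rule zero_if_linear_le_quadratic)
  fix t :: real
  define \<mu> where "\<mu> = u \<bullet> (A *v u)"
  define y where "y = u + t *\<^sub>R w"
  have yV: "y \<in> V"
    using u w V by (simp add: y_def subspace_add subspace_scale)
  have yy: "y \<bullet> y = 1 + t\<^sup>2 * (w \<bullet> w)"
    using u w by (simp add: y_def norm_eq_1 inner_add_left inner_add_right inner_commute power2_eq_square)
  then have y0: "0 < y \<bullet> y"
    by (simp add: add_pos_nonneg)
  then have "(y /\<^sub>R norm y) \<bullet> (A *v (y /\<^sub>R norm y)) \<le> \<mu>"
    unfolding \<mu>_def using yV V by (intro umax) (auto simp: subspace_scale)
  then have "(y \<bullet> (A *v y)) / (norm y)\<^sup>2 \<le> \<mu>"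
    by (simp add: matrix_vector_mult_scaleR power2_eq_square divide_inverse ac_simps)
  then have "y \<bullet> (A *v y) \<le> \<mu> * (y \<bullet> y)"
    using y0 by (simp add: power2_norm_eq_inner divide_le_eq)
  moreover have "y \<bullet> (A *v y) = \<mu> + 2 * t * (w \<bullet> (A *v u)) + t\<^sup>2 * (w \<bullet> (A *v w))"
    using sym_mat_inner[OF sym, of u w]
    by (simp add: y_def \<mu>_def matrix_vector_right_distrib matrix_vector_mult_scaleR inner_add_left
        inner_add_right inner_commute power2_eq_square algebra_simps)
  ultimately show "2 * t * (w \<bullet> (A *v u)) \<le> t\<^sup>2 * (\<mu> * (w \<bullet> w) - w \<bullet> (A *v w))"
    using yy by (simp add: algebra_simps)
qed

lemma sym_mat_eigenvector_in_invariant_subspace: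
  fixes A :: "real^'n^'n"
  assumes sym: "sym_mat A" and V: "subspace V" and inv: "\<And>x. x \<in> V \<Longrightarrow> A *v x \<in> V"
    and v: "v \<in> V" "v \<noteq> 0"
  shows "\<exists>u\<in>V. norm u = 1 \<and> (\<exists>\<mu>. A *v u = \<mu> *\<^sub>R u)"
proof -
  define K where "K = V \<inter> sphere 0 1"
  have "compact K"
    unfolding K_def by (rule closed_Int_compact) (auto simp: V closed_subspace)
  moreover have "v /\<^sub>R norm v \<in> K"
    using v V by (auto simp: K_def subspace_scale)
  moreover have "continuous_on K (\<lambda>x. x \<bullet> (A *v x))"
    by (intro continuous_intros)
  ultimately obtain u where "u \<in> K" and umax: "\<And>y. y \<in> K \<Longrightarrow> y \<bullet> (A *v y) \<le> u \<bullet> (A *v u)"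
    using continuous_attains_sup[of K "\<lambda>x. x \<bullet> (A *v x)"] by blast
  then have uV: "u \<in> V" and u: "norm u = 1"
    by (auto simp: K_def)
  define \<mu> where "\<mu> = u \<bullet> (A *v u)"
  define z where "z = A *v u - \<mu> *\<^sub>R u"
  have zV: "z \<in> V"
    using V uV inv by (simp add: z_def subspace_diff subspace_scale)
  have zu: "z \<bullet> u = 0"
    using u by (simp add: z_def \<mu>_def norm_eq_1 inner_diff_left inner_diff_right inner_commute)
  have "z \<bullet> (A *v u) = 0"
    using sym_mat_max_quadratic_orthogonal[OF sym V uV u _ zV zu] umax by (simp add: K_def)
  then have "z \<bullet> z = 0"
    using zu by (simp add: z_def inner_diff_right)
  then show ?thesis
    using uV u by (auto simp: z_def intro!: exI[of _ \<mu>])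
qed

definition orthonormal_eigenvectors :: "real^'n^'n \<Rightarrow> (real^'n) set \<Rightarrow> bool" where
  "orthonormal_eigenvectors A B \<longleftrightarrow> finite B
     \<and> (\<forall>b\<in>B. norm b = 1 \<and> (\<exists>\<mu>. A *v b = \<mu> *\<^sub>R b))
     \<and> (\<forall>b\<in>B. \<forall>b'\<in>B. b \<noteq> b' \<longrightarrow> b \<bullet> b' = 0)"

lemma orthonormal_eigenvectors_extend:
  fixes A :: "real^'n^'n"
  assumes sym: "sym_mat A" and B: "orthonormal_eigenvectors A B" and card: "card B < CARD('n)"
  shows "\<exists>u. norm u = 1 \<and> (\<exists>\<mu>. A *v u = \<mu> *\<^sub>R u) \<and> (\<forall>b\<in>B. u \<bullet> b = 0)"
proof -
  define V where "V = {x. \<forall>b\<in>B. x \<bullet> b = 0}"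
  have fin: "finite B"
    using B by (simp add: orthonormal_eigenvectors_def)
  have V: "subspace V"
    by (auto simp: subspace_def V_def inner_add_left)
  have inv: "A *v x \<in> V" if "x \<in> V" for x
  proof -
    have "(A *v x) \<bullet> b = 0" if b: "b \<in> B" for b
    proof -
      obtain \<mu> where "A *v b = \<mu> *\<^sub>R b"
        using B b unfolding orthonormal_eigenvectors_def by blast
      then have "(A *v x) \<bullet> b = \<mu> * (x \<bullet> b)"
        using sym_mat_inner[OF sym, of x b] by simp
      then show ?thesis
        using \<open>x \<in> V\<close> b by (simp add: V_def)
    qed
    then show ?thesis
      by (simp add: V_def)
  qed
  have "dim B < DIM(real^'n)"
    using card dim_le_card'[OF fin] by simp
  then obtain z where "z \<noteq> 0" "\<And>y. y \<in> span B \<Longrightarrow> orthogonal z y"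
    using orthogonal_to_subspace_exists by blast
  moreover have "z \<in> V"
    using calculation(2) by (simp add: V_def orthogonal_def span_base)
  ultimately obtain u where "u \<in> V" "norm u = 1" "\<exists>\<mu>. A *v u = \<mu> *\<^sub>R u"
    using sym_mat_eigenvector_in_invariant_subspace[OF sym V inv] by blast
  then show ?thesis
    by (auto simp: V_def)
qed

lemma orthonormal_eigenvectors_exist:
  fixes A :: "real^'n^'n"
  assumes sym: "sym_mat A" and "k \<le> CARD('n)"
  shows "\<exists>B. orthonormal_eigenvectors A B \<and> card B = k"
  using \<open>k \<le> CARD('n)\<close>
proof (induction k)
  case 0
  show ?case
    by (intro exI[of _ "{}"]) (simp add: orthonormal_eigenvectors_def)
next
  case (Suc k)
  then obtain B where B: "orthonormal_eigenvectors A B" "card B = k"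
    by auto
  then obtain u where u: "norm u = 1" "\<exists>\<mu>. A *v u = \<mu> *\<^sub>R u" "\<forall>b\<in>B. u \<bullet> b = 0"
    using orthonormal_eigenvectors_extend[OF sym B(1)] Suc.prems by auto
  have "u \<notin> B"
    using u by (metis inner_eq_zero_iff norm_zero zero_neq_one)
  moreover have "finite B"
    using B by (simp add: orthonormal_eigenvectors_def)
  moreover have "orthonormal_eigenvectors A (insert u B)"
    using B(1) u by (auto simp: orthonormal_eigenvectors_def inner_commute)
  ultimately show ?case
    using B(2) by (intro exI[of _ "insert u B"]) simp
qed

theorem sym_mat_spectral:
  fixes A :: "real^'n^'n"
  assumes sym: "sym_mat A"
  obtains P d where "orthogonal_matrix P" "A = orth_diag P d"
proof -
  obtain B where B: "orthonormal_eigenvectors A B" "card B = CARD('n)"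
    using orthonormal_eigenvectors_exist[OF sym] by blast
  have "finite B"
    using B by (simp add: orthonormal_eigenvectors_def)
  then obtain f where f: "bij_betw f (UNIV :: 'n set) B"
    using finite_same_card_bij[of "UNIV :: 'n set" B] B by auto
  then have fB: "f j \<in> B" and finj: "f i = f j \<Longrightarrow> i = j" for i j
    by (auto simp: bij_betw_def inj_on_def)
  define P :: "real^'n^'n" where "P = (\<chi> i j. f j $ i)"
  have col: "column j P = f j" for j
    by (simp add: P_def column_def vec_eq_iff)
  have P: "orthogonal_matrix P"
    unfolding orthogonal_matrix_orthonormal_columns orthogonal_def col
    using B(1) fB finj by (auto simp: orthonormal_eigenvectors_def) (metis fB)
  have "\<exists>\<mu>. A *v column j P = \<mu> *\<^sub>R column j P" for j
    using B(1) fB[of j] by (simp add: col orthonormal_eigenvectors_def)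
  then obtain d where "\<And>j. A *v column j P = d j *\<^sub>R column j P"
    by metis
  with P show thesis
    by (intro that orth_diag_eqI)
qed

section \<open>Positive definite square roots and inverses\<close>

text \<open>For a unit eigenvector \<open>v\<close> of \<open>R - Q\<close> with eigenvalue \<open>\<mu>\<close> one has
  \<open>v \<bullet> (R\<^sup>2 - Q\<^sup>2) v = \<mu> (v \<bullet> Q v + v \<bullet> R v)\<close>, and the second factor is at least \<open>c\<close>.\<close>
lemma pd_sqrt_perturbation:
  fixes R Q :: "real^'n^'n"
  assumes R: "pd_mat R" and Q: "sym_mat Q" and c: "0 < c"
    and Qc: "\<And>x. c * (norm x)\<^sup>2 \<le> x \<bullet> (Q *v x)"
    and K: "\<And>y. \<bar>y \<bullet> ((R ** R - Q ** Q) *v y)\<bar> \<le> K * (norm y)\<^sup>2"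
  shows "norm ((R - Q) *v x) \<le> (K / c) * norm x"
proof -
  have Rs: "sym_mat R"
    using R by (simp add: pd_mat_def)
  obtain P \<mu> where P: "orthogonal_matrix P" and D: "R - Q = orth_diag P \<mu>"
    using sym_mat_spectral[OF sym_mat_diff[OF Rs Q]] by blast
  have "\<bar>\<mu> k\<bar> \<le> K / c" for k
  proof -
    define v where "v = P *v axis k 1"
    have v: "norm v = 1" "(R - Q) *v v = \<mu> k *\<^sub>R v"
      using P D by (simp_all add: v_def norm_orthogonal_matrix_vector orth_diag_eigenvector)
    then have vv: "v \<bullet> v = 1"
      by (simp add: norm_eq_1)
    have Rv: "R *v v = Q *v v + \<mu> k *\<^sub>R v"
      using v(2) by (simp add: matrix_vector_mult_diff_rdistrib algebra_simps)
    define q where "q = v \<bullet> (Q *v v)"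
    have qc: "c \<le> q"
      using Qc[of v] v by (simp add: q_def)
    have "0 < v \<bullet> (R *v v)"
      using R v(1) unfolding pd_mat_def by (metis norm_zero zero_neq_one)
    then have r: "0 < q + \<mu> k"
      using vv by (simp add: Rv q_def inner_add_right)
    have "v \<bullet> ((R ** R - Q ** Q) *v v) = (R *v v) \<bullet> (R *v v) - (Q *v v) \<bullet> (Q *v v)"
      using sym_mat_inner[OF Rs, of v "R *v v"] sym_mat_inner[OF Q, of v "Q *v v"]
      by (simp add: matrix_vector_mult_diff_rdistrib matrix_vector_mul_assoc[symmetric] inner_diff_right)
    also have "\<dots> = \<mu> k * (q + (q + \<mu> k))"
      using vv by (simp add: Rv q_def inner_add_left inner_add_right inner_commute algebra_simps)
    finally have "\<bar>\<mu> k\<bar> * (q + (q + \<mu> k)) \<le> K"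
      using K[of v] v r qc c by (simp add: abs_mult)
    moreover have "\<bar>\<mu> k\<bar> * c \<le> \<bar>\<mu> k\<bar> * (q + (q + \<mu> k))"
      using r qc by (intro mult_left_mono) auto
    ultimately show ?thesis
      using c by (simp add: pos_le_divide_eq)
  qed
  then show ?thesis
    using norm_orth_diag_vector_le[OF P] D by metis
qed

lemma pd_sqrt_unique:
  fixes R Q :: "real^'n^'n"
  assumes "pd_mat R" "pd_mat Q" "R ** R = Q ** Q"
  shows "R = Q"
proof -
  obtain c where c: "0 < c" "\<And>x. c * (norm x)\<^sup>2 \<le> x \<bullet> (Q *v x)"
    using pd_mat_lower_bound[OF assms(2)] by blast
  have "norm ((R - Q) *v x) \<le> (0 / c) * norm x" for x
    by (rule pd_sqrt_perturbation[OF assms(1) _ c]) (use assms in \<open>auto simp: pd_mat_def\<close>)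
  then show ?thesis
    by (simp add: matrix_eq matrix_vector_mult_diff_rdistrib)
qed

lemma mat_sqrt_eqI:
  assumes "pd_mat R" "R ** R = H"
  shows "mat_sqrt H = R"
  unfolding mat_sqrt_def using assms pd_sqrt_unique by blast

lemma tendsto_pd_sqrt:
  fixes R :: "'a \<Rightarrow> real^'n^'n"
  assumes Q: "pd_mat Q" and R: "\<forall>\<^sub>F l in F. pd_mat (R l) \<and> R l ** R l = M l"
    and M: "(M \<longlongrightarrow> Q ** Q) F"
  shows "(R \<longlongrightarrow> Q) F"
proof -
  obtain c where c: "0 < c" "\<And>x. c * (norm x)\<^sup>2 \<le> x \<bullet> (Q *v x)"
    using pd_mat_lower_bound[OF Q] by blast
  define \<delta> where "\<delta> l = norm (M l - Q ** Q) / c" for l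
  show ?thesis
  proof (rule tendsto_matrix_of_operator_bound)
    show "\<forall>\<^sub>F l in F. \<forall>x. norm ((R l - Q) *v x) \<le> \<delta> l * norm x"
      using R
    proof eventually_elim
      case (elim l)
      then have "pd_mat (R l)" "R l ** R l = M l"
        by auto
      then show ?case
        unfolding \<delta>_def using Q
        by (intro allI pd_sqrt_perturbation[OF _ _ c]) (simp_all add: pd_mat_def abs_inner_matrix_vector_le)
    qed
    have "((\<lambda>l. norm (M l - Q ** Q)) \<longlongrightarrow> 0) F"
      using M by (simp add: tendsto_norm_zero_iff LIM_zero_iff)
    then show "(\<delta> \<longlongrightarrow> 0) F"
      unfolding \<delta>_def by (rule tendsto_divide_zero)
  qed
qed

lemma matrix_inv_eqI:
  fixes A B :: "real^'n^'n"
  assumes AB: "A ** B = mat 1"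
  shows "matrix_inv A = B"
proof -
  have "A ** matrix_inv A = mat 1 \<and> matrix_inv A ** A = mat 1"
    unfolding matrix_inv_def
    by (rule someI[of _ B]) (use AB matrix_left_right_inverse in blast)
  then have "matrix_inv A = matrix_inv A ** (A ** B)"
    by (simp add: AB)
  also have "\<dots> = B"
    using \<open>A ** matrix_inv A = mat 1 \<and> matrix_inv A ** A = mat 1\<close> by (simp add: matrix_mul_assoc)
  finally show ?thesis .
qed

lemma pd_mat_inverse:
  fixes A :: "real^'n^'n"
  assumes "pd_mat A"
  shows "matrix_inv A ** A = mat 1"
proof -
  have "\<forall>x. A *v x = 0 \<longrightarrow> x = 0"
    using assms by (force simp: pd_mat_def)
  then obtain B where "B ** A = mat 1"
    using matrix_left_invertible_ker by blast
  then show ?thesis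
    by (metis matrix_inv_eqI matrix_left_right_inverse)
qed

lemma norm_le_perturbed_inverse:
  fixes X X0 W0 :: "real^'n^'n"
  assumes W0: "W0 ** X0 = mat 1" and small: "2 * norm W0 * norm (X - X0) \<le> 1"
  shows "norm z \<le> 2 * norm W0 * norm (X *v z)"
proof -
  have "norm z = norm (W0 *v (X0 *v z))"
    using W0 by (simp add: matrix_vector_mul_assoc)
  also have "\<dots> \<le> norm W0 * norm (X *v z - (X - X0) *v z)"
    by (simp add: norm_matrix_vector_mult_le matrix_vector_mult_diff_rdistrib)
  also have "\<dots> \<le> norm W0 * (norm (X *v z) + norm (X - X0) * norm z)"
    by (intro mult_left_mono order_trans[OF norm_triangle_ineq4] add_left_mono
        norm_matrix_vector_mult_le) simp_all
  finally have "2 * norm z \<le> 2 * norm W0 * norm (X *v z) + (2 * norm W0 * norm (X - X0)) * norm z"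
    by (simp add: algebra_simps)
  moreover have "(2 * norm W0 * norm (X - X0)) * norm z \<le> norm z"
    using small by (simp add: mult_left_le_one_le)
  ultimately show ?thesis
    by linarith
qed

lemma tendsto_matrix_inverse:
  fixes X W :: "'a \<Rightarrow> real^'n^'n"
  assumes X: "(X \<longlongrightarrow> X0) F" and W0: "W0 ** X0 = mat 1"
    and XW: "\<forall>\<^sub>F l in F. X l ** W l = mat 1"
  shows "(W \<longlongrightarrow> W0) F"
proof -
  define b where "b = norm W0"
  have "((\<lambda>l. norm (X l - X0)) \<longlongrightarrow> 0) F"
    using X by (simp add: tendsto_norm_zero_iff LIM_zero_iff)
  then have \<delta>: "((\<lambda>l. 2 * b * b * norm (X l - X0)) \<longlongrightarrow> 0) F"
    by (rule tendsto_mult_right_zero)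
  have "((\<lambda>l. 2 * b * norm (X l - X0)) \<longlongrightarrow> 0) F"
    by (rule tendsto_mult_right_zero) fact
  then have "\<forall>\<^sub>F l in F. 2 * b * norm (X l - X0) < 1"
    by (rule order_tendstoD(2)) simp
  then have small: "\<forall>\<^sub>F l in F. 2 * b * norm (X l - X0) \<le> 1"
    by eventually_elim simp
  show ?thesis
  proof (rule tendsto_matrix_of_operator_bound[OF _ \<delta>])
    show "\<forall>\<^sub>F l in F. \<forall>y. norm ((W l - W0) *v y) \<le> 2 * b * b * norm (X l - X0) * norm y"
      using XW small
    proof eventually_elim
      case (elim l)
      show ?case
      proof
        fix y
        have "W l ** X l = mat 1" "X0 ** W0 = mat 1"
          using elim(1) W0 matrix_left_right_inverse by blast+
        then have "X0 *v (W0 *v y) = y" "W l *v (X l *v (W0 *v y)) = W0 *v y"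
          by (simp_all add: matrix_vector_mul_assoc matrix_mul_assoc)
        then have "(W l - W0) *v y = W l *v ((X0 - X l) *v (W0 *v y))"
          by (simp add: matrix_vector_mult_diff_rdistrib matrix_vector_mult_diff_distrib)
        moreover have "norm (W l *v u) \<le> 2 * b * norm u" for u
          using norm_le_perturbed_inverse[OF W0 elim(2)[unfolded b_def], of "W l *v u"] elim(1)
          by (simp add: b_def matrix_vector_mul_assoc)
        ultimately have "norm ((W l - W0) *v y) \<le> 2 * b * norm ((X0 - X l) *v (W0 *v y))"
          by metis
        also have "\<dots> \<le> 2 * b * (norm (X l - X0) * (b * norm y))"
          by (intro mult_left_mono order_trans[OF norm_matrix_vector_mult_le] mult_mono)
            (simp_all add: b_def norm_minus_commute norm_matrix_vector_mult_le)
        finally show "norm ((W l - W0) *v y) \<le> 2 * b * b * norm (X l - X0) * norm y"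
          by (simp add: ac_simps)
      qed
    qed
  qed
qed

section \<open>The matrices of the proposition for fixed \<open>l\<close>\<close>

lemma inner_mat_orth_diag:
  fixes P :: "real^'n^'n"
  assumes P: "orthogonal_matrix P" and A: "S - l *\<^sub>R T = orth_diag P d"
  shows "inner_mat S T l = orth_diag P (\<lambda>k. l + (d k)\<^sup>2 / 4)"
proof -
  have "inner_mat S T l = orth_diag P (\<lambda>k. l) + (1/4) *\<^sub>R orth_diag P (\<lambda>k. d k * d k)"
    using P by (simp add: inner_mat_def A orth_diag_const orth_diag_mult)
  also have "\<dots> = orth_diag P (\<lambda>k. l + (d k)\<^sup>2 / 4)"
    by (simp add: orth_diag_add orth_diag_scaleR[symmetric] power2_eq_square)
  finally show ?thesis .
qed

lemma mat_sqrt_inner_mat_orth_diag: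
  fixes P :: "real^'n^'n"
  assumes P: "orthogonal_matrix P" and A: "S - l *\<^sub>R T = orth_diag P d" and l: "0 < l"
  shows "mat_sqrt (inner_mat S T l) = orth_diag P (\<lambda>k. sqrt (l + (d k)\<^sup>2 / 4))"
proof (rule mat_sqrt_eqI)
  show "pd_mat (orth_diag P (\<lambda>k. sqrt (l + (d k)\<^sup>2 / 4)))"
    using P l by (intro pd_mat_orth_diag) (auto intro: add_pos_nonneg)
  show "orth_diag P (\<lambda>k. sqrt (l + (d k)\<^sup>2 / 4)) ** orth_diag P (\<lambda>k. sqrt (l + (d k)\<^sup>2 / 4))
      = inner_mat S T l"
    using l by (simp add: orth_diag_mult[OF P] inner_mat_orth_diag[OF P A] add_nonneg_nonneg)
qed

lemma mat_sqrt_inner_mat: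
  fixes S T :: "real^'n^'n"
  assumes S: "sym_mat S" and T: "sym_mat T" and l: "0 < l"
  shows "pd_mat (mat_sqrt (inner_mat S T l))"
    and "mat_sqrt (inner_mat S T l) ** mat_sqrt (inner_mat S T l) = inner_mat S T l"
proof -
  obtain P d where P: "orthogonal_matrix P" and A: "S - l *\<^sub>R T = orth_diag P d"
    using sym_mat_spectral[OF sym_mat_diff[OF S sym_mat_scaleR[OF T]]] by blast
  show "pd_mat (mat_sqrt (inner_mat S T l))"
    using P l by (simp add: mat_sqrt_inner_mat_orth_diag[OF P A l] pd_mat_orth_diag add_pos_nonneg)
  show "mat_sqrt (inner_mat S T l) ** mat_sqrt (inner_mat S T l) = inner_mat S T l"
    unfolding mat_sqrt_inner_mat_orth_diag[OF P A l]
    using l by (simp add: orth_diag_mult[OF P] inner_mat_orth_diag[OF P A] add_nonneg_nonneg)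
qed

text \<open>With \<open>s = sqrt (l + d\<^sup>2/4) > \<bar>d\<bar>/2\<close>, the eigenvalues \<open>s + d/2\<close> of \<open>pre_omega\<close> are positive
  and \<open>(s + d/2) (s - d/2) = l\<close>.\<close>
lemma Omega_Ia_orth_diag:
  fixes P :: "real^'n^'n"
  assumes P: "orthogonal_matrix P" and A: "S - l *\<^sub>R T = orth_diag P d" and l: "0 < l"
  defines "s \<equiv> \<lambda>k. sqrt (l + (d k)\<^sup>2 / 4)"
  shows "pre_omega S T l ** Omega_Ia S T l = mat 1"
    and "Omega_Ia S T l = orth_diag P (\<lambda>k. (s k - d k / 2) / l)"
    and "\<And>k. 0 < (s k - d k / 2) / l"
proof -
  have s_gt: "\<bar>d k\<bar> / 2 < s k" for k
    unfolding s_def using l by (intro real_less_rsqrt) (simp add: power_divide)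
  have X: "pre_omega S T l = orth_diag P (\<lambda>k. s k + d k / 2)"
    by (simp add: pre_omega_def mat_sqrt_inner_mat_orth_diag[OF P A l] A s_def orth_diag_add
        orth_diag_scaleR[symmetric])
  have "(s k + d k / 2) * ((s k - d k / 2) / l) = 1" for k
    using l by (simp add: s_def field_simps power2_eq_square add_nonneg_nonneg)
  then have XW: "pre_omega S T l ** orth_diag P (\<lambda>k. (s k - d k / 2) / l) = mat 1"
    by (simp add: X orth_diag_mult[OF P] orth_diag_const[OF P])
  then show "Omega_Ia S T l = orth_diag P (\<lambda>k. (s k - d k / 2) / l)"
    by (simp add: Omega_Ia_def matrix_inv_eqI)
  with XW show "pre_omega S T l ** Omega_Ia S T l = mat 1"
    by simp
  show "0 < (s k - d k / 2) / l" for k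
    using s_gt[of k] l by (simp add: abs_less_iff)
qed

lemma pre_omega_Omega_Ia:
  fixes S T :: "real^'n^'n"
  assumes S: "sym_mat S" and T: "sym_mat T" and l: "0 < l"
  shows "pre_omega S T l ** Omega_Ia S T l = mat 1"
proof -
  obtain P d where "orthogonal_matrix P" "S - l *\<^sub>R T = orth_diag P d"
    using sym_mat_spectral[OF sym_mat_diff[OF S sym_mat_scaleR[OF T]]] by blast
  from Omega_Ia_orth_diag(1)[OF this l] show ?thesis .
qed

lemma pd_mat_Omega_Ia:
  fixes S T :: "real^'n^'n"
  assumes S: "sym_mat S" and T: "sym_mat T" and l: "0 < l"
  shows "pd_mat (Omega_Ia S T l)"
proof -
  obtain P d where "orthogonal_matrix P" "S - l *\<^sub>R T = orth_diag P d"
    using sym_mat_spectral[OF sym_mat_diff[OF S sym_mat_scaleR[OF T]]] by blast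
  with l show ?thesis
    by (simp add: Omega_Ia_orth_diag pd_mat_orth_diag)
qed

lemma Omega_Ia_eq:
  fixes S T :: "real^'n^'n"
  assumes S: "sym_mat S" and T: "sym_mat T" and l: "0 < l"
  shows "Omega_Ia S T l
    = (1/l) *\<^sub>R mat_sqrt (inner_mat S T l) - (1/(2*l)) *\<^sub>R (S - l *\<^sub>R T)"
proof -
  obtain P d where P: "orthogonal_matrix P" and A: "S - l *\<^sub>R T = orth_diag P d"
    using sym_mat_spectral[OF sym_mat_diff[OF S sym_mat_scaleR[OF T]]] by blast
  show ?thesis
    by (simp add: Omega_Ia_orth_diag[OF P A l] mat_sqrt_inner_mat_orth_diag[OF P A l] A
        orth_diag_diff[symmetric] orth_diag_scaleR[symmetric] diff_divide_distrib)
qed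

section \<open>Limits\<close>

lemma inner_mat_expand:
  "inner_mat S T l = (1/4) *\<^sub>R (S ** S) + l *\<^sub>R (mat 1 - (1/4) *\<^sub>R (S ** T + T ** S))
    + (l\<^sup>2 / 4) *\<^sub>R (T ** T)"
  by (simp add: inner_mat_def matrix_diff_ldistrib matrix_diff_rdistrib matrix_add_ldistrib
      scalar_matrix_assoc[symmetric] matrix_scalar_ac power2_eq_square algebra_simps)

lemma mat_sqrt_inner_mat_tendsto_at_right_0:
  fixes S T :: "real^'n^'n"
  assumes S: "pd_mat S" and T: "sym_mat T"
  shows "((\<lambda>l. mat_sqrt (inner_mat S T l)) \<longlongrightarrow> (1/2) *\<^sub>R S) (at_right 0)"
proof (rule tendsto_pd_sqrt)
  show "pd_mat ((1/2) *\<^sub>R S)"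
    using S by (simp add: pd_mat_scaleR)
  have Ss: "sym_mat S"
    using S by (simp add: pd_mat_def)
  have "\<forall>\<^sub>F l in at_right 0. 0 < (l::real)"
    by (simp add: eventually_at_right_less)
  then show "\<forall>\<^sub>F l in at_right 0. pd_mat (mat_sqrt (inner_mat S T l))
      \<and> mat_sqrt (inner_mat S T l) ** mat_sqrt (inner_mat S T l) = inner_mat S T l"
    by eventually_elim (simp add: mat_sqrt_inner_mat[OF Ss T])
  have "(inner_mat S T \<longlongrightarrow> (1/4) *\<^sub>R (S ** S) + 0 *\<^sub>R (mat 1 - (1/4) *\<^sub>R (S ** T + T ** S))
      + (0\<^sup>2 / 4) *\<^sub>R (T ** T)) (at_right 0)"
    unfolding inner_mat_expand[abs_def] by (intro tendsto_intros) simp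
  then show "(inner_mat S T \<longlongrightarrow> ((1/2) *\<^sub>R S) ** ((1/2) *\<^sub>R S)) (at_right 0)"
    by (simp add: scalar_matrix_assoc[symmetric] matrix_scalar_ac)
qed

lemma Omega_Ia_tendsto_at_right_0:
  fixes S T :: "real^'n^'n"
  assumes S: "pd_mat S" and T: "sym_mat T"
  shows "(Omega_Ia S T \<longlongrightarrow> matrix_inv S) (at_right 0)"
proof (rule tendsto_matrix_inverse[OF _ pd_mat_inverse[OF S]])
  have "(pre_omega S T \<longlongrightarrow> (1/2) *\<^sub>R S + (1/2) *\<^sub>R (S - 0 *\<^sub>R T)) (at_right 0)"
    unfolding pre_omega_def[abs_def]
    by (intro tendsto_intros mat_sqrt_inner_mat_tendsto_at_right_0 S T)
  then show "(pre_omega S T \<longlongrightarrow> S) (at_right 0)"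
    by (simp add: scaleR_add_left[symmetric])
  have Ss: "sym_mat S"
    using S by (simp add: pd_mat_def)
  have "\<forall>\<^sub>F l in at_right 0. 0 < (l::real)"
    by (simp add: eventually_at_right_less)
  then show "\<forall>\<^sub>F l in at_right 0. pre_omega S T l ** Omega_Ia S T l = mat 1"
    by eventually_elim (rule pre_omega_Omega_Ia[OF Ss T])
qed

lemma mat_sqrt_inner_mat_tendsto_at_top:
  fixes S T :: "real^'n^'n"
  assumes S: "sym_mat S" and T: "pd_mat T"
  shows "((\<lambda>l. inverse l *\<^sub>R mat_sqrt (inner_mat S T l)) \<longlongrightarrow> (1/2) *\<^sub>R T) at_top"
proof (rule tendsto_pd_sqrt)
  show "pd_mat ((1/2) *\<^sub>R T)"
    using T by (simp add: pd_mat_scaleR)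
  have Ts: "sym_mat T"
    using T by (simp add: pd_mat_def)
  define M where "M l = (inverse l)\<^sup>2 *\<^sub>R ((1/4) *\<^sub>R (S ** S))
    + inverse l *\<^sub>R (mat 1 - (1/4) *\<^sub>R (S ** T + T ** S)) + (1/4) *\<^sub>R (T ** T)" for l
  have "\<forall>\<^sub>F l in at_top. 0 < (l::real)"
    by (simp add: eventually_gt_at_top)
  then show "\<forall>\<^sub>F l in at_top. pd_mat (inverse l *\<^sub>R mat_sqrt (inner_mat S T l))
      \<and> (inverse l *\<^sub>R mat_sqrt (inner_mat S T l)) ** (inverse l *\<^sub>R mat_sqrt (inner_mat S T l)) = M l"
  proof eventually_elim
    case (elim l)
    have "(inverse l *\<^sub>R mat_sqrt (inner_mat S T l)) ** (inverse l *\<^sub>R mat_sqrt (inner_mat S T l))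
        = (inverse l)\<^sup>2 *\<^sub>R inner_mat S T l"
      by (simp add: scalar_matrix_assoc[symmetric] matrix_scalar_ac
          mat_sqrt_inner_mat(2)[OF S Ts elim] power2_eq_square)
    moreover have "(inverse l)\<^sup>2 * l = inverse l" "(inverse l)\<^sup>2 * (l\<^sup>2 / 4) = 1/4"
      using elim by (simp_all add: power2_eq_square field_simps)
    moreover have "pd_mat (inverse l *\<^sub>R mat_sqrt (inner_mat S T l))"
      using elim by (intro pd_mat_scaleR mat_sqrt_inner_mat(1)[OF S Ts]) simp_all
    ultimately show ?case
      by (simp only: M_def inner_mat_expand scaleR_add_right scaleR_scaleR)
  qed
  have "(M \<longlongrightarrow> 0\<^sup>2 *\<^sub>R ((1/4) *\<^sub>R (S ** S)) + 0 *\<^sub>R (mat 1 - (1/4) *\<^sub>R (S ** T + T ** S))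
      + (1/4) *\<^sub>R (T ** T)) at_top"
    unfolding M_def[abs_def] by (intro tendsto_intros tendsto_inverse_0_at_top filterlim_ident)
  then show "(M \<longlongrightarrow> ((1/2) *\<^sub>R T) ** ((1/2) *\<^sub>R T)) at_top"
    by (simp add: scalar_matrix_assoc[symmetric] matrix_scalar_ac)
qed

lemma Omega_Ia_tendsto_at_top:
  fixes S T :: "real^'n^'n"
  assumes S: "sym_mat S" and T: "pd_mat T"
  shows "(Omega_Ia S T \<longlongrightarrow> T) at_top"
proof -
  have "((\<lambda>l. inverse l *\<^sub>R mat_sqrt (inner_mat S T l) + (1/2) *\<^sub>R T - (inverse l * (1/2)) *\<^sub>R S)
      \<longlongrightarrow> (1/2) *\<^sub>R T + (1/2) *\<^sub>R T - (0 * (1/2)) *\<^sub>R S) at_top"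
    by (intro tendsto_intros tendsto_inverse_0_at_top filterlim_ident
        mat_sqrt_inner_mat_tendsto_at_top S T)
  moreover have "\<forall>\<^sub>F l in at_top. 0 < (l::real)"
    by (simp add: eventually_gt_at_top)
  then have "\<forall>\<^sub>F l in at_top. inverse l *\<^sub>R mat_sqrt (inner_mat S T l) + (1/2) *\<^sub>R T
      - (inverse l * (1/2)) *\<^sub>R S = Omega_Ia S T l"
  proof eventually_elim
    case (elim l)
    have "1 / (2 * l) = inverse l * (1/2)" "1 / (2 * l) * l = 1/2"
      using elim by (simp_all add: field_simps)
    with elim T show ?case
      by (simp add: Omega_Ia_eq[OF S _ elim] pd_mat_def scaleR_diff_right)
  qed
  ultimately show ?thesis
    by (simp add: scaleR_add_left[symmetric] Lim_transform_eventually)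
qed

theorem proposition1:
  fixes S T :: "real^'n^'n"
  assumes S: "psd_mat S" and T: "pd_mat T"
  shows "(\<forall>l>0. pd_mat (inner_mat S T l)
                \<and> (\<exists>!R. pd_mat R \<and> R ** R = inner_mat S T l)
                \<and> invertible (pre_omega S T l)
                \<and> pd_mat (Omega_Ia S T l))
       \<and> (pd_mat S \<longrightarrow> (Omega_Ia S T \<longlongrightarrow> matrix_inv S) (at_right 0))
       \<and> (Omega_Ia S T \<longlongrightarrow> T) at_top"
proof -
  have Ss: "sym_mat S" and Ts: "sym_mat T"
    using S T by (simp_all add: psd_mat_def pd_mat_def)
  have "pd_mat (inner_mat S T l) \<and> (\<exists>!R. pd_mat R \<and> R ** R = inner_mat S T l)
      \<and> invertible (pre_omega S T l) \<and> pd_mat (Omega_Ia S T l)" if l: "0 < l" for l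
  proof (intro conjI)
    note sqrt = mat_sqrt_inner_mat[OF Ss Ts l]
    show "pd_mat (inner_mat S T l)"
      using pd_mat_mult_self[OF sqrt(1)] sqrt(2) by simp
    show "\<exists>!R. pd_mat R \<and> R ** R = inner_mat S T l"
      using sqrt pd_sqrt_unique by metis
    show "invertible (pre_omega S T l)"
      using pre_omega_Omega_Ia[OF Ss Ts l] invertible_right_inverse by blast
    show "pd_mat (Omega_Ia S T l)"
      by (rule pd_mat_Omega_Ia[OF Ss Ts l])
  qed
  then show ?thesis
    using Omega_Ia_tendsto_at_right_0[OF _ Ts] Omega_Ia_tendsto_at_top[OF Ss T] by blast
qed

end
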